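(* Let $\mathcal K$ be a finitely complete 2-category with a good yoneda structure. Let $C$ be small, $i:M\to\mathcal PC$ and $f:C\to A$ with $M$ and $f$ admissible. Then the colimit of $f$ weighted by $i$ exists iff there is an admissible 1-cell $\mathrm{col}(i,f):M\to A$ together with an isomorphism $A(\mathrm{col}(i,f),1)\cong\mathcal PC(i,A(f,1))$.
   Context: Given $f:A\to C$, $g:A\to B$, $h:B\to C$, a 2-cell $\phi:f\Rightarrow hg$ exhibits $g$ as a left lifting of $f$ along (through) $h$ if for every $k:A\to B$, $\kappa\mapsto(h\kappa)\cdot\phi$ is a bijection from 2-cells $g\Rightarrow k$ to 2-cells $f\Rightarrow hk$; it is absolute if $\phi j$ exhibits $gj$ as a left lifting of $fj$ along $h$ for all $j:D\to A$; $\phi$ exhibits $h$ as a left extension of $f$ along $g$ if for every $k:B\to C$, $\kappa\mapsto(\kappa g)\cdot\phi$ is a bijection from 2-cells $h\Rightarrow k$ to 2-cells $f\Rightarrow kg$; it is pointwise if for every $c:X\to B$, with lax pullback $p:g/c\to A$, $q:g/c\to X$, $\lambda:gp\Rightarrow cq$, $(h\lambda)\cdot(\phi p)$ exhibits $hc$ as a left extension of $fp$ along $q$. A good yoneda structure on a finitely complete 2-category: a class of admissible 1-cells with $fg$ admissible whenever $f$ is; an object $A$ is admissible when $1_A$ is; for admissible $A$ an object $\mathcal PA$ and admissible $y_A:A\to\mathcal PA$; for $f:A\to B$ with $A$, $f$ admissible a 1-cell $B(f,1):B\to\mathcal PA$ and 2-cell $\chi^f:y_A\Rightarrow B(f,1)f$;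 such that (i) $\chi^f$ exhibits $f$ as an absolute left lifting of $y_A$ through $B(f,1)$; (ii) if $A$, $f:A\to B$ admissible and $\psi:y_A\Rightarrow kf$ exhibits $f$ as an absolute left lifting of $y_A$ along $k$, then $\psi$ exhibits $k$ as a pointwise left extension of $y_A$ along $f$. $C$ is small if $C$ and $\mathcal PC$ are admissible. Notation: $B(f,x)$ means $B(f,1)x$; thus for admissible $i:M\to\mathcal PC$ (admissible here since $\mathcal PC$ is admissible), $\mathcal PC(i,A(f,1))=\mathcal PC(i,1)A(f,1):A\to\mathcal PM$. For $C$ small, $i:M\to\mathcal PC$, $f:C\to A$ with $M$, $f$ admissible, a colimit of $f$ weighted by $i$ is an admissible $\mathrm{col}(i,f):M\to A$ with a 2-cell $\eta:i\Rightarrow A(f,1)\mathrm{col}(i,f)$ exhibiting $\mathrm{col}(i,f)$ as an absolute left lifting of $i$ through $A(f,1)$. *)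

theory Defs
  imports Main
begin

text \<open>A (strict) 2-category given by carrier sets of objects, 1-cells and 2-cells.
 c1 K g f is the composite g f (first f, then g); vc K b a is vertical composite b . a
 (first a); hc K b a is horizontal composite b * a (a on the right, i.e. acting first).\<close>

record ('o,'a,'c) tcat =
  ob  :: "'o set"
  ar  :: "'a set"
  ce  :: "'c set"
  s1  :: "'a \<Rightarrow> 'o"
  t1  :: "'a \<Rightarrow> 'o"
  id1 :: "'o \<Rightarrow> 'a"
  c1  :: "'a \<Rightarrow> 'a \<Rightarrow> 'a"
  s2  :: "'c \<Rightarrow> 'a"
  t2  :: "'c \<Rightarrow> 'a"
  id2 :: "'a \<Rightarrow> 'c"
  vc  :: "'c \<Rightarrow> 'c \<Rightarrow> 'c"
  hc  :: "'c \<Rightarrow> 'c \<Rightarrow> 'c"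

definition hom1 :: "('o,'a,'c) tcat \<Rightarrow> 'o \<Rightarrow> 'o \<Rightarrow> 'a \<Rightarrow> bool" where
  "hom1 K X Y f \<longleftrightarrow> f \<in> ar K \<and> s1 K f = X \<and> t1 K f = Y"

definition cell :: "('o,'a,'c) tcat \<Rightarrow> 'a \<Rightarrow> 'a \<Rightarrow> 'c \<Rightarrow> bool" where
  "cell K f g \<alpha> \<longleftrightarrow> \<alpha> \<in> ce K \<and> s2 K \<alpha> = f \<and> t2 K \<alpha> = g"

definition wl :: "('o,'a,'c) tcat \<Rightarrow> 'a \<Rightarrow> 'c \<Rightarrow> 'c" where
  "wl K h \<alpha> = hc K (id2 K h) \<alpha>"
definition wr :: "('o,'a,'c) tcat \<Rightarrow> 'c \<Rightarrow> 'a \<Rightarrow> 'c" where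
  "wr K \<alpha> j = hc K \<alpha> (id2 K j)"

definition twocat :: "('o,'a,'c) tcat \<Rightarrow> bool" where
  "twocat K \<longleftrightarrow>
    (\<forall>f\<in>ar K. s1 K f \<in> ob K \<and> t1 K f \<in> ob K) \<and>
    (\<forall>X\<in>ob K. hom1 K X X (id1 K X)) \<and>
    (\<forall>f\<in>ar K. \<forall>g\<in>ar K. t1 K f = s1 K g \<longrightarrow> hom1 K (s1 K f) (t1 K g) (c1 K g f)) \<and>
    (\<forall>f\<in>ar K. \<forall>g\<in>ar K. \<forall>h\<in>ar K. t1 K f = s1 K g \<and> t1 K g = s1 K h \<longrightarrow>
        c1 K h (c1 K g f) = c1 K (c1 K h g) f) \<and>
    (\<forall>f\<in>ar K. c1 K (id1 K (t1 K f)) f = f \<and> c1 K f (id1 K (s1 K f)) = f) \<and>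
    (\<forall>\<alpha>\<in>ce K. s2 K \<alpha> \<in> ar K \<and> t2 K \<alpha> \<in> ar K \<and>
        s1 K (s2 K \<alpha>) = s1 K (t2 K \<alpha>) \<and> t1 K (s2 K \<alpha>) = t1 K (t2 K \<alpha>)) \<and>
    (\<forall>f\<in>ar K. cell K f f (id2 K f)) \<and>
    (\<forall>\<alpha>\<in>ce K. \<forall>\<beta>\<in>ce K. t2 K \<alpha> = s2 K \<beta> \<longrightarrow> cell K (s2 K \<alpha>) (t2 K \<beta>) (vc K \<beta> \<alpha>)) \<and>
    (\<forall>\<alpha>\<in>ce K. \<forall>\<beta>\<in>ce K. \<forall>\<gamma>\<in>ce K. t2 K \<alpha> = s2 K \<beta> \<and> t2 K \<beta> = s2 K \<gamma> \<longrightarrow>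
        vc K \<gamma> (vc K \<beta> \<alpha>) = vc K (vc K \<gamma> \<beta>) \<alpha>) \<and>
    (\<forall>\<alpha>\<in>ce K. vc K (id2 K (t2 K \<alpha>)) \<alpha> = \<alpha> \<and> vc K \<alpha> (id2 K (s2 K \<alpha>)) = \<alpha>) \<and>
    (\<forall>\<alpha>\<in>ce K. \<forall>\<beta>\<in>ce K. t1 K (s2 K \<alpha>) = s1 K (s2 K \<beta>) \<longrightarrow>
        cell K (c1 K (s2 K \<beta>) (s2 K \<alpha>)) (c1 K (t2 K \<beta>) (t2 K \<alpha>)) (hc K \<beta> \<alpha>)) \<and>
    (\<forall>\<alpha>\<in>ce K. \<forall>\<beta>\<in>ce K. \<forall>\<gamma>\<in>ce K.
        t1 K (s2 K \<alpha>) = s1 K (s2 K \<beta>) \<and> t1 K (s2 K \<beta>) = s1 K (s2 K \<gamma>) \<longrightarrow>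
        hc K \<gamma> (hc K \<beta> \<alpha>) = hc K (hc K \<gamma> \<beta>) \<alpha>) \<and>
    (\<forall>\<alpha>\<in>ce K. hc K (id2 K (id1 K (t1 K (s2 K \<alpha>)))) \<alpha> = \<alpha> \<and>
                hc K \<alpha> (id2 K (id1 K (s1 K (s2 K \<alpha>)))) = \<alpha>) \<and>
    (\<forall>f\<in>ar K. \<forall>g\<in>ar K. t1 K f = s1 K g \<longrightarrow> hc K (id2 K g) (id2 K f) = id2 K (c1 K g f)) \<and>
    (\<forall>\<alpha>\<in>ce K. \<forall>\<alpha>'\<in>ce K. \<forall>\<beta>\<in>ce K. \<forall>\<beta>'\<in>ce K.
        t2 K \<alpha> = s2 K \<alpha>' \<and> t2 K \<beta> = s2 K \<beta>' \<and> t1 K (s2 K \<alpha>) = s1 K (s2 K \<beta>) \<longrightarrow>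
        hc K (vc K \<beta>' \<beta>) (vc K \<alpha>' \<alpha>) = vc K (hc K \<beta>' \<alpha>') (hc K \<beta> \<alpha>))"

definition iso2 :: "('o,'a,'c) tcat \<Rightarrow> 'c \<Rightarrow> 'a \<Rightarrow> 'a \<Rightarrow> bool" where
  "iso2 K \<theta> f g \<longleftrightarrow> cell K f g \<theta> \<and>
     (\<exists>\<theta>'. cell K g f \<theta>' \<and> vc K \<theta>' \<theta> = id2 K f \<and> vc K \<theta> \<theta>' = id2 K g)"

definition is_terminal :: "('o,'a,'c) tcat \<Rightarrow> 'o \<Rightarrow> bool" where
  "is_terminal K T \<longleftrightarrow> T \<in> ob K \<and>
     (\<forall>X\<in>ob K. \<exists>t. hom1 K X T t \<and> (\<forall>t'. hom1 K X T t' \<longrightarrow> t' = t) \<and>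
                      (\<forall>\<alpha>. cell K t t \<alpha> \<longrightarrow> \<alpha> = id2 K t))"

definition is_pullback :: "('o,'a,'c) tcat \<Rightarrow> 'a \<Rightarrow> 'a \<Rightarrow> 'o \<Rightarrow> 'a \<Rightarrow> 'a \<Rightarrow> bool" where
  "is_pullback K f g P p q \<longleftrightarrow>
     hom1 K P (s1 K f) p \<and> hom1 K P (s1 K g) q \<and> c1 K f p = c1 K g q \<and>
     (\<forall>X\<in>ob K. \<forall>u v. hom1 K X (s1 K f) u \<and> hom1 K X (s1 K g) v \<and> c1 K f u = c1 K g v \<longrightarrow>
        (\<exists>!w. hom1 K X P w \<and> c1 K p w = u \<and> c1 K q w = v)) \<and>
     (\<forall>X\<in>ob K. \<forall>w w' \<alpha> \<beta>. hom1 K X P w \<and> hom1 K X P w' \<and>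
        cell K (c1 K p w) (c1 K p w') \<alpha> \<and> cell K (c1 K q w) (c1 K q w') \<beta> \<and>
        wl K f \<alpha> = wl K g \<beta> \<longrightarrow>
        (\<exists>!\<theta>. cell K w w' \<theta> \<and> wl K p \<theta> = \<alpha> \<and> wl K q \<theta> = \<beta>))"

definition is_comma :: "('o,'a,'c) tcat \<Rightarrow> 'a \<Rightarrow> 'a \<Rightarrow> 'o \<Rightarrow> 'a \<Rightarrow> 'a \<Rightarrow> 'c \<Rightarrow> bool" where
  "is_comma K f g P p q lam \<longleftrightarrow>
     t1 K f = t1 K g \<and>
     hom1 K P (s1 K f) p \<and> hom1 K P (s1 K g) q \<and> cell K (c1 K f p) (c1 K g q) lam \<and>
     (\<forall>X\<in>ob K. \<forall>u v \<mu>. hom1 K X (s1 K f) u \<and> hom1 K X (s1 K g) v \<and>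
        cell K (c1 K f u) (c1 K g v) \<mu> \<longrightarrow>
        (\<exists>!w. hom1 K X P w \<and> c1 K p w = u \<and> c1 K q w = v \<and> wr K lam w = \<mu>)) \<and>
     (\<forall>X\<in>ob K. \<forall>w w' \<alpha> \<beta>. hom1 K X P w \<and> hom1 K X P w' \<and>
        cell K (c1 K p w) (c1 K p w') \<alpha> \<and> cell K (c1 K q w) (c1 K q w') \<beta> \<and>
        vc K (wl K g \<beta>) (wr K lam w) = vc K (wr K lam w') (wl K f \<alpha>) \<longrightarrow>
        (\<exists>!\<theta>. cell K w w' \<theta> \<and> wl K p \<theta> = \<alpha> \<and> wl K q \<theta> = \<beta>))"

text \<open>Finitely complete: terminal object, all 2-pullbacks and all comma objects
  (these generate all finite weighted limits).\<close>
definition fin_complete :: "('o,'a,'c) tcat \<Rightarrow> bool" where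
  "fin_complete K \<longleftrightarrow>
     (\<exists>T. is_terminal K T) \<and>
     (\<forall>f g. f \<in> ar K \<and> g \<in> ar K \<and> t1 K f = t1 K g \<longrightarrow> (\<exists>P p q. is_pullback K f g P p q)) \<and>
     (\<forall>f g. f \<in> ar K \<and> g \<in> ar K \<and> t1 K f = t1 K g \<longrightarrow> (\<exists>P p q lam. is_comma K f g P p q lam))"

text \<open>phi : f => h g exhibits g as a left lifting of f along h (f : A -> C, g : A -> B, h : B -> C).\<close>
definition left_lifting :: "('o,'a,'c) tcat \<Rightarrow> 'c \<Rightarrow> 'a \<Rightarrow> 'a \<Rightarrow> 'a \<Rightarrow> bool" where
  "left_lifting K \<phi> f g h \<longleftrightarrow>
     f \<in> ar K \<and> g \<in> ar K \<and> h \<in> ar K \<and>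
     s1 K g = s1 K f \<and> t1 K g = s1 K h \<and> t1 K h = t1 K f \<and>
     cell K f (c1 K h g) \<phi> \<and>
     (\<forall>k. hom1 K (s1 K g) (t1 K g) k \<longrightarrow>
        bij_betw (\<lambda>\<kappa>. vc K (wl K h \<kappa>) \<phi>) {\<kappa>. cell K g k \<kappa>} {\<psi>. cell K f (c1 K h k) \<psi>})"

definition abs_left_lifting :: "('o,'a,'c) tcat \<Rightarrow> 'c \<Rightarrow> 'a \<Rightarrow> 'a \<Rightarrow> 'a \<Rightarrow> bool" where
  "abs_left_lifting K \<phi> f g h \<longleftrightarrow> left_lifting K \<phi> f g h \<and>
     (\<forall>D j. hom1 K D (s1 K f) j \<longrightarrow> left_lifting K (wr K \<phi> j) (c1 K f j) (c1 K g j) h)"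

definition left_ext :: "('o,'a,'c) tcat \<Rightarrow> 'c \<Rightarrow> 'a \<Rightarrow> 'a \<Rightarrow> 'a \<Rightarrow> bool" where
  "left_ext K \<phi> f g h \<longleftrightarrow>
     f \<in> ar K \<and> g \<in> ar K \<and> h \<in> ar K \<and>
     s1 K g = s1 K f \<and> t1 K g = s1 K h \<and> t1 K h = t1 K f \<and>
     cell K f (c1 K h g) \<phi> \<and>
     (\<forall>k. hom1 K (s1 K h) (t1 K h) k \<longrightarrow>
        bij_betw (\<lambda>\<kappa>. vc K (wr K \<kappa> g) \<phi>) {\<kappa>. cell K h k \<kappa>} {\<psi>. cell K f (c1 K k g) \<psi>})"

definition pw_left_ext :: "('o,'a,'c) tcat \<Rightarrow> 'c \<Rightarrow> 'a \<Rightarrow> 'a \<Rightarrow> 'a \<Rightarrow> bool" where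
  "pw_left_ext K \<phi> f g h \<longleftrightarrow> left_ext K \<phi> f g h \<and>
     (\<forall>X c P p q lam. hom1 K X (t1 K g) c \<and> is_comma K g c P p q lam \<longrightarrow>
        left_ext K (vc K (wl K h lam) (wr K \<phi> p)) (c1 K f p) q (c1 K h c))"

record ('o,'a,'c) ystr =
  adm :: "'a \<Rightarrow> bool"
  PP  :: "'o \<Rightarrow> 'o"
  yo  :: "'o \<Rightarrow> 'a"
  rep :: "'a \<Rightarrow> 'a"        \<comment> \<open>rep f = B(f,1) for f : A -> B\<close>
  chi :: "'a \<Rightarrow> 'c"

definition adm_ob :: "('o,'a,'c) ystr \<Rightarrow> ('o,'a,'c) tcat \<Rightarrow> 'o \<Rightarrow> bool" where
  "adm_ob Y K A \<longleftrightarrow> adm Y (id1 K A)"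

definition good_yoneda :: "('o,'a,'c) tcat \<Rightarrow> ('o,'a,'c) ystr \<Rightarrow> bool" where
  "good_yoneda K Y \<longleftrightarrow>
     (\<forall>f. adm Y f \<longrightarrow> f \<in> ar K) \<and>
     (\<forall>f g. adm Y f \<and> g \<in> ar K \<and> t1 K g = s1 K f \<longrightarrow> adm Y (c1 K f g)) \<and>
     (\<forall>A\<in>ob K. adm_ob Y K A \<longrightarrow>
        PP Y A \<in> ob K \<and> hom1 K A (PP Y A) (yo Y A) \<and> adm Y (yo Y A)) \<and>
     (\<forall>f. adm Y f \<and> adm_ob Y K (s1 K f) \<longrightarrow>
        hom1 K (t1 K f) (PP Y (s1 K f)) (rep Y f) \<and>
        cell K (yo Y (s1 K f)) (c1 K (rep Y f) f) (chi Y f) \<and>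
        abs_left_lifting K (chi Y f) (yo Y (s1 K f)) f (rep Y f)) \<and>
     (\<forall>f k \<psi>. adm Y f \<and> adm_ob Y K (s1 K f) \<and>
        abs_left_lifting K \<psi> (yo Y (s1 K f)) f k \<longrightarrow>
        pw_left_ext K \<psi> (yo Y (s1 K f)) f k)"

definition small :: "('o,'a,'c) tcat \<Rightarrow> ('o,'a,'c) ystr \<Rightarrow> 'o \<Rightarrow> bool" where
  "small K Y C \<longleftrightarrow> C \<in> ob K \<and> adm_ob Y K C \<and> adm_ob Y K (PP Y C)"

definition is_wcolimit ::
  "('o,'a,'c) tcat \<Rightarrow> ('o,'a,'c) ystr \<Rightarrow> 'a \<Rightarrow> 'a \<Rightarrow> 'a \<Rightarrow> 'c \<Rightarrow> bool" where
  "is_wcolimit K Y i f col \<eta> \<longleftrightarrow>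
     adm Y col \<and> hom1 K (s1 K i) (t1 K f) col \<and>
     cell K i (c1 K (rep Y f) col) \<eta> \<and>
     abs_left_lifting K \<eta> i col (rep Y f)"

definition has_wcolimit :: "('o,'a,'c) tcat \<Rightarrow> ('o,'a,'c) ystr \<Rightarrow> 'a \<Rightarrow> 'a \<Rightarrow> bool" where
  "has_wcolimit K Y i f \<longleftrightarrow> (\<exists>col \<eta>. is_wcolimit K Y i f col \<eta>)"

end

theory Submission
  imports Defs
begin

(* Pasting the yoneda cell chi^i : y_M => PC(i,1) i with a colimiting cell
   eta : i => A(f,1) col exhibits col as an absolute left lifting of y_M through
   PC(i,1) A(f,1); by axiom (ii) of a good yoneda structure the pasted cell is then
   a left extension of y_M along col, and so is chi^col with A(col,1), so the two
   extensions agree up to isomorphism.  Conversely, transporting chi^col along an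
   isomorphism A(col,1) => PC(i,1) A(f,1) gives an absolute left lifting through the
   composite; it factors as such a pasting through chi^i, and the pasting lemma for
   left liftings cancels chi^i. *)

locale two_category =
  fixes K :: "('o,'a,'c) tcat"
  assumes ar_ob: "f \<in> ar K \<Longrightarrow> s1 K f \<in> ob K \<and> t1 K f \<in> ob K"
    and id1_hom1: "X \<in> ob K \<Longrightarrow> hom1 K X X (id1 K X)"
    and c1_hom1: "hom1 K X Y f \<Longrightarrow> hom1 K Y Z g \<Longrightarrow> hom1 K X Z (c1 K g f)"
    and c1_assoc: "hom1 K X Y f \<Longrightarrow> hom1 K Y Z g \<Longrightarrow> hom1 K Z W h \<Longrightarrow>
      c1 K h (c1 K g f) = c1 K (c1 K h g) f"
    and c1_id1_left: "hom1 K X Y f \<Longrightarrow> c1 K (id1 K Y) f = f"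
    and c1_id1_right: "hom1 K X Y f \<Longrightarrow> c1 K f (id1 K X) = f"
    and cell_ar: "cell K f g a \<Longrightarrow> f \<in> ar K \<and> g \<in> ar K \<and> s1 K f = s1 K g \<and> t1 K f = t1 K g"
    and id2_cell: "f \<in> ar K \<Longrightarrow> cell K f f (id2 K f)"
    and vc_cell: "cell K f g a \<Longrightarrow> cell K g h b \<Longrightarrow> cell K f h (vc K b a)"
    and vc_assoc: "cell K f g a \<Longrightarrow> cell K g h b \<Longrightarrow> cell K h k c \<Longrightarrow>
      vc K c (vc K b a) = vc K (vc K c b) a"
    and vc_id2_left: "cell K f g a \<Longrightarrow> vc K (id2 K g) a = a"
    and vc_id2_right: "cell K f g a \<Longrightarrow> vc K a (id2 K f) = a"
    and hc_cell: "cell K f g a \<Longrightarrow> cell K f' g' b \<Longrightarrow> t1 K f = s1 K f' \<Longrightarrow>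
      cell K (c1 K f' f) (c1 K g' g) (hc K b a)"
    and hc_assoc: "cell K f g a \<Longrightarrow> cell K f' g' b \<Longrightarrow> cell K f'' g'' c \<Longrightarrow>
      t1 K f = s1 K f' \<Longrightarrow> t1 K f' = s1 K f'' \<Longrightarrow> hc K c (hc K b a) = hc K (hc K c b) a"
    and hc_id2_id1_left: "cell K f g a \<Longrightarrow> hc K (id2 K (id1 K (t1 K f))) a = a"
    and hc_id2_id1_right: "cell K f g a \<Longrightarrow> hc K a (id2 K (id1 K (s1 K f))) = a"
    and hc_id2: "hom1 K X Y f \<Longrightarrow> hom1 K Y Z g \<Longrightarrow> hc K (id2 K g) (id2 K f) = id2 K (c1 K g f)"
    and interchange: "cell K f g a \<Longrightarrow> cell K g h a' \<Longrightarrow> cell K f' g' b \<Longrightarrow> cell K g' h' b' \<Longrightarrow>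
      t1 K f = s1 K f' \<Longrightarrow> hc K (vc K b' b) (vc K a' a) = vc K (hc K b' a') (hc K b a)"

lemma two_category_if_twocat: "twocat K \<Longrightarrow> two_category K"
  unfolding twocat_def
  by (elim conjE, unfold_locales) (simp_all add: hom1_def cell_def)

context two_category
begin

lemma wl_cell: "hom1 K Y Z h \<Longrightarrow> cell K f g a \<Longrightarrow> t1 K f = Y \<Longrightarrow>
   cell K (c1 K h f) (c1 K h g) (wl K h a)"
  unfolding wl_def by (rule hc_cell) (auto simp: hom1_def intro: id2_cell)

lemma wr_cell: "cell K f g a \<Longrightarrow> hom1 K X Y j \<Longrightarrow> s1 K f = Y \<Longrightarrow>
   cell K (c1 K f j) (c1 K g j) (wr K a j)"
  unfolding wr_def by (rule hc_cell) (auto simp: hom1_def intro: id2_cell)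

lemma wl_vc:
  assumes h: "hom1 K Y Z h" and a: "cell K f g a" and b: "cell K g k b" and "t1 K f = Y"
  shows "wl K h (vc K b a) = vc K (wl K h b) (wl K h a)"
proof -
  have h2: "cell K h h (id2 K h)" using h id2_cell by (simp add: hom1_def)
  have "wl K h (vc K b a) = hc K (vc K (id2 K h) (id2 K h)) (vc K b a)"
    unfolding wl_def using vc_id2_left[OF h2] by simp
  also have "\<dots> = vc K (hc K (id2 K h) b) (hc K (id2 K h) a)"
    by (rule interchange[OF a b h2 h2]) (use assms in \<open>simp add: hom1_def\<close>)
  finally show ?thesis unfolding wl_def .
qed

lemma wr_vc:
  assumes a: "cell K f g a" and b: "cell K g k b" and j: "hom1 K X Y j" and "s1 K f = Y"
  shows "wr K (vc K b a) j = vc K (wr K b j) (wr K a j)"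
proof -
  have j2: "cell K j j (id2 K j)" using j id2_cell by (simp add: hom1_def)
  have "wr K (vc K b a) j = hc K (vc K b a) (vc K (id2 K j) (id2 K j))"
    unfolding wr_def using vc_id2_left[OF j2] by simp
  also have "\<dots> = vc K (hc K b (id2 K j)) (hc K a (id2 K j))"
    by (rule interchange[OF j2 j2 a b]) (use assms in \<open>simp add: hom1_def\<close>)
  finally show ?thesis unfolding wr_def .
qed

lemma wr_id2: "hom1 K X Y j \<Longrightarrow> hom1 K Y Z h \<Longrightarrow> wr K (id2 K h) j = id2 K (c1 K h j)"
  unfolding wr_def by (rule hc_id2)

lemma wl_c1:
  assumes h1: "hom1 K Y Z h1" and h2: "hom1 K Z W h2" and a: "cell K f g a" and "t1 K f = Y"
  shows "wl K (c1 K h2 h1) a = wl K h2 (wl K h1 a)"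
proof -
  have "wl K (c1 K h2 h1) a = hc K (hc K (id2 K h2) (id2 K h1)) a"
    unfolding wl_def using hc_id2[OF h1 h2] by simp
  also have "\<dots> = hc K (id2 K h2) (hc K (id2 K h1) a)"
    by (rule hc_assoc[symmetric, OF a]) (use assms in \<open>auto simp: hom1_def intro: id2_cell\<close>)
  finally show ?thesis unfolding wl_def .
qed

lemma wr_c1:
  assumes a: "cell K f g a" and j: "hom1 K Y X j" and j': "hom1 K W Y j'" and "s1 K f = X"
  shows "wr K (wr K a j) j' = wr K a (c1 K j j')"
proof -
  have "wr K (wr K a j) j' = hc K a (hc K (id2 K j) (id2 K j'))"
    unfolding wr_def
    by (rule hc_assoc[symmetric, OF _ _ a]) (use assms in \<open>auto simp: hom1_def intro: id2_cell\<close>)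
  also have "\<dots> = wr K a (c1 K j j')"
    unfolding wr_def using hc_id2[OF j' j] by simp
  finally show ?thesis .
qed

lemma wr_wl: "hom1 K Y Z h \<Longrightarrow> cell K f g a \<Longrightarrow> t1 K f = Y \<Longrightarrow> hom1 K X W j \<Longrightarrow> s1 K f = W \<Longrightarrow>
   wr K (wl K h a) j = wl K h (wr K a j)"
  unfolding wr_def wl_def by (rule hc_assoc[symmetric]) (auto simp: hom1_def intro: id2_cell)

lemma whisker_exchange:
  assumes \<theta>: "cell K h h' \<theta>" and \<kappa>: "cell K g k \<kappa>" and "t1 K g = s1 K h"
  shows "vc K (wl K h' \<kappa>) (wr K \<theta> g) = vc K (wr K \<theta> k) (wl K h \<kappa>)"
proof -
  have ar: "h \<in> ar K" "h' \<in> ar K" "g \<in> ar K" "k \<in> ar K" using \<theta> \<kappa> cell_ar by blast+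
  have "vc K (wl K h' \<kappa>) (wr K \<theta> g) = hc K (vc K (id2 K h') \<theta>) (vc K \<kappa> (id2 K g))"
    unfolding wl_def wr_def
    by (rule interchange[symmetric, OF id2_cell[OF ar(3)] \<kappa> \<theta> id2_cell[OF ar(2)]])
      (use assms in simp)
  also have "\<dots> = hc K (vc K \<theta> (id2 K h)) (vc K (id2 K k) \<kappa>)"
    using \<theta> \<kappa> vc_id2_left vc_id2_right by simp
  also have "\<dots> = vc K (wr K \<theta> k) (wl K h \<kappa>)"
    unfolding wl_def wr_def
    by (rule interchange[OF \<kappa> id2_cell[OF ar(4)] id2_cell[OF ar(1)] \<theta>]) (use assms in simp)
  finally show ?thesis .
qed

lemma vc_wr_vc:
  assumes \<phi>: "cell K f (c1 K h g) \<phi>" and \<alpha>: "cell K h h' \<alpha>" and \<beta>: "cell K h' h'' \<beta>"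
    and g: "hom1 K X (s1 K h) g"
  shows "vc K (wr K (vc K \<beta> \<alpha>) g) \<phi> = vc K (wr K \<beta> g) (vc K (wr K \<alpha> g) \<phi>)"
proof -
  have \<alpha>g: "cell K (c1 K h g) (c1 K h' g) (wr K \<alpha> g)" using wr_cell[OF \<alpha> g] by simp
  have \<beta>g: "cell K (c1 K h' g) (c1 K h'' g) (wr K \<beta> g)" using wr_cell[OF \<beta> g] \<alpha> cell_ar by simp
  show ?thesis using wr_vc[OF \<alpha> \<beta> g] vc_assoc[OF \<phi> \<alpha>g \<beta>g] by simp
qed

lemma vc_wr_id2:
  assumes \<phi>: "cell K f (c1 K h g) \<phi>" and g: "hom1 K X Y g" and h: "hom1 K Y Z h"
  shows "vc K (wr K (id2 K h) g) \<phi> = \<phi>"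
  using wr_id2[OF g h] vc_id2_left[OF \<phi>] by simp

lemma iso2_wr:
  assumes \<theta>: "iso2 K \<theta> h h'" and k: "hom1 K X (s1 K h) k"
  shows "iso2 K (wr K \<theta> k) (c1 K h k) (c1 K h' k)"
proof -
  obtain \<theta>' where t: "cell K h h' \<theta>" "cell K h' h \<theta>'"
      "vc K \<theta>' \<theta> = id2 K h" "vc K \<theta> \<theta>' = id2 K h'"
    using \<theta> unfolding iso2_def by blast
  have h: "hom1 K (s1 K h) (t1 K h) h" "hom1 K (s1 K h) (t1 K h) h'"
    using cell_ar[OF t(1)] by (auto simp: hom1_def)
  have "vc K (wr K \<theta>' k) (wr K \<theta> k) = id2 K (c1 K h k)"
    using wr_vc[OF t(1) t(2) k] t(3) wr_id2[OF k h(1)] by simp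
  moreover have "vc K (wr K \<theta> k) (wr K \<theta>' k) = id2 K (c1 K h' k)"
    using wr_vc[OF t(2) t(1)] k t(4) wr_id2[OF k h(2)] cell_ar[OF t(1)] by simp
  ultimately show ?thesis
    unfolding iso2_def using wr_cell[OF t(1) k] wr_cell[OF t(2) k] cell_ar[OF t(1)] by auto
qed

lemma iso2_vc_bij:
  assumes "iso2 K \<theta> u v"
  shows "bij_betw (vc K \<theta>) {\<psi>. cell K f u \<psi>} {\<psi>. cell K f v \<psi>}"
proof -
  obtain \<theta>' where t: "cell K u v \<theta>" "cell K v u \<theta>'" "vc K \<theta>' \<theta> = id2 K u" "vc K \<theta> \<theta>' = id2 K v"
    using assms unfolding iso2_def by blast
  show ?thesis
  proof (rule bij_betw_byWitness[where f' = "vc K \<theta>'"])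
    show "\<forall>\<psi>\<in>{\<psi>. cell K f u \<psi>}. vc K \<theta>' (vc K \<theta> \<psi>) = \<psi>"
      using vc_assoc[OF _ t(1) t(2)] t(3) vc_id2_left by auto
    show "\<forall>\<psi>\<in>{\<psi>. cell K f v \<psi>}. vc K \<theta> (vc K \<theta>' \<psi>) = \<psi>"
      using vc_assoc[OF _ t(2) t(1)] t(4) vc_id2_left by auto
    show "vc K \<theta> ` {\<psi>. cell K f u \<psi>} \<subseteq> {\<psi>. cell K f v \<psi>}"
      using vc_cell[OF _ t(1)] by auto
    show "vc K \<theta>' ` {\<psi>. cell K f v \<psi>} \<subseteq> {\<psi>. cell K f u \<psi>}"
      using vc_cell[OF _ t(2)] by auto
  qed
qed

lemma left_lifting_factor:
  assumes "left_lifting K \<phi> f g h" and "hom1 K (s1 K f) (s1 K h) k" and "cell K f (c1 K h k) \<psi>"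
  obtains \<kappa> where "cell K g k \<kappa>" and "vc K (wl K h \<kappa>) \<phi> = \<psi>"
proof -
  have "bij_betw (\<lambda>\<kappa>. vc K (wl K h \<kappa>) \<phi>) {\<kappa>. cell K g k \<kappa>} {\<psi>. cell K f (c1 K h k) \<psi>}"
    using assms(1,2) unfolding left_lifting_def by auto
  then have "\<psi> \<in> (\<lambda>\<kappa>. vc K (wl K h \<kappa>) \<phi>) ` {\<kappa>. cell K g k \<kappa>}"
    using assms(3) by (simp add: bij_betw_imp_surj_on)
  then show thesis using that by blast
qed

lemma left_ext_factor:
  assumes "left_ext K \<phi> f g h" and "hom1 K (s1 K h) (t1 K h) k" and "cell K f (c1 K k g) \<psi>"
  obtains \<kappa> where "cell K h k \<kappa>" and "vc K (wr K \<kappa> g) \<phi> = \<psi>"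
proof -
  have "bij_betw (\<lambda>\<kappa>. vc K (wr K \<kappa> g) \<phi>) {\<kappa>. cell K h k \<kappa>} {\<psi>. cell K f (c1 K k g) \<psi>}"
    using assms(1,2) unfolding left_ext_def by auto
  then have "\<psi> \<in> (\<lambda>\<kappa>. vc K (wr K \<kappa> g) \<phi>) ` {\<kappa>. cell K h k \<kappa>}"
    using assms(3) by (simp add: bij_betw_imp_surj_on)
  then show thesis using that by blast
qed

lemma left_ext_cancel:
  assumes "left_ext K \<phi> f g h" and "cell K h k \<alpha>" and "cell K h k \<beta>"
    and "vc K (wr K \<alpha> g) \<phi> = vc K (wr K \<beta> g) \<phi>"
  shows "\<alpha> = \<beta>"
proof -
  have "hom1 K (s1 K h) (t1 K h) k" using cell_ar[OF assms(2)] by (simp add: hom1_def)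
  then have "inj_on (\<lambda>\<kappa>. vc K (wr K \<kappa> g) \<phi>) {\<kappa>. cell K h k \<kappa>}"
    using assms(1) unfolding left_ext_def bij_betw_def by auto
  then show ?thesis using assms(2-4) by (auto dest: inj_onD)
qed

lemma left_ext_unique:
  assumes e: "left_ext K \<phi> f g h" and e': "left_ext K \<phi>' f g h'"
  shows "\<exists>\<theta>. iso2 K \<theta> h h'"
proof -
  from e have \<phi>: "cell K f (c1 K h g) \<phi>" and g: "hom1 K (s1 K f) (s1 K h) g"
    and h: "hom1 K (s1 K h) (t1 K h) h"
    unfolding left_ext_def by (auto simp: hom1_def)
  from e e' have \<phi>': "cell K f (c1 K h' g) \<phi>'" and h': "hom1 K (s1 K h) (t1 K h) h'"
    and hh': "s1 K h' = s1 K h" "t1 K h' = t1 K h"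
    unfolding left_ext_def by (auto simp: hom1_def)
  obtain \<alpha> where \<alpha>: "cell K h h' \<alpha>" "vc K (wr K \<alpha> g) \<phi> = \<phi>'"
    using left_ext_factor[OF e h' \<phi>'] .
  obtain \<beta> where \<beta>: "cell K h' h \<beta>" "vc K (wr K \<beta> g) \<phi>' = \<phi>"
    using left_ext_factor[OF e'] h \<phi> hh' by metis
  have "vc K (wr K (vc K \<beta> \<alpha>) g) \<phi> = vc K (wr K (id2 K h) g) \<phi>"
    using vc_wr_vc[OF \<phi> \<alpha>(1) \<beta>(1) g] vc_wr_id2[OF \<phi> g h] \<alpha>(2) \<beta>(2) by simp
  then have "vc K \<beta> \<alpha> = id2 K h"
    using left_ext_cancel[OF e] vc_cell[OF \<alpha>(1) \<beta>(1)] id2_cell h by (simp add: hom1_def)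
  moreover have "vc K (wr K (vc K \<alpha> \<beta>) g) \<phi>' = vc K (wr K (id2 K h') g) \<phi>'"
    using vc_wr_vc[OF \<phi>' \<beta>(1) \<alpha>(1)] vc_wr_id2[OF \<phi>'] g h' hh' \<alpha>(2) \<beta>(2) by simp
  then have "vc K \<alpha> \<beta> = id2 K h'"
    using left_ext_cancel[OF e'] vc_cell[OF \<beta>(1) \<alpha>(1)] id2_cell h' by (simp add: hom1_def)
  ultimately show ?thesis unfolding iso2_def using \<alpha>(1) \<beta>(1) by blast
qed

lemma left_lifting_iso:
  assumes ll: "left_lifting K \<phi> f g h" and \<theta>: "iso2 K \<theta> h h'"
  shows "left_lifting K (vc K (wr K \<theta> g) \<phi>) f g h'"
proof -
  from ll have \<phi>: "cell K f (c1 K h g) \<phi>" and g: "hom1 K (s1 K f) (s1 K h) g"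
    and lifts: "\<And>k. hom1 K (s1 K f) (s1 K h) k \<Longrightarrow>
      bij_betw (\<lambda>\<kappa>. vc K (wl K h \<kappa>) \<phi>) {\<kappa>. cell K g k \<kappa>} {\<psi>. cell K f (c1 K h k) \<psi>}"
    unfolding left_lifting_def by (auto simp: hom1_def)
  from \<theta> have t: "cell K h h' \<theta>" unfolding iso2_def by blast
  have hh': "h' \<in> ar K" "s1 K h' = s1 K h" "t1 K h' = t1 K h" using cell_ar[OF t] by auto
  have h: "hom1 K (s1 K h) (t1 K f) h" "hom1 K (s1 K h) (t1 K f) h'"
    using ll hh' unfolding left_lifting_def by (auto simp: hom1_def)
  have tg: "cell K (c1 K h g) (c1 K h' g) (wr K \<theta> g)" using wr_cell[OF t g] by simp
  have "bij_betw (\<lambda>\<kappa>. vc K (wl K h' \<kappa>) (vc K (wr K \<theta> g) \<phi>)) {\<kappa>. cell K g k \<kappa>}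
      {\<psi>. cell K f (c1 K h' k) \<psi>}" (is "bij_betw ?F ?A ?B")
    if k: "hom1 K (s1 K f) (s1 K h) k" for k
  proof -
    have tk: "cell K (c1 K h k) (c1 K h' k) (wr K \<theta> k)" using wr_cell[OF t k] by simp
    let ?G = "vc K (wr K \<theta> k) \<circ> (\<lambda>\<kappa>. vc K (wl K h \<kappa>) \<phi>)"
    have "bij_betw ?G ?A ?B"
      using bij_betw_trans[OF lifts[OF k] iso2_vc_bij[OF iso2_wr[OF \<theta> k]]] .
    moreover have "?F \<kappa> = ?G \<kappa>" if "\<kappa> \<in> ?A" for \<kappa>
    proof -
      have \<kappa>: "cell K g k \<kappa>" using that by simp
      have h'\<kappa>: "cell K (c1 K h' g) (c1 K h' k) (wl K h' \<kappa>)"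
        using wl_cell[OF h(2) \<kappa>] g by (simp add: hom1_def)
      have h\<kappa>: "cell K (c1 K h g) (c1 K h k) (wl K h \<kappa>)"
        using wl_cell[OF h(1) \<kappa>] g by (simp add: hom1_def)
      have "vc K (wl K h' \<kappa>) (vc K (wr K \<theta> g) \<phi>) = vc K (vc K (wl K h' \<kappa>) (wr K \<theta> g)) \<phi>"
        using vc_assoc[OF \<phi> tg h'\<kappa>] .
      also have "\<dots> = vc K (vc K (wr K \<theta> k) (wl K h \<kappa>)) \<phi>"
        using whisker_exchange[OF t \<kappa>] g by (simp add: hom1_def)
      also have "\<dots> = vc K (wr K \<theta> k) (vc K (wl K h \<kappa>) \<phi>)"
        using vc_assoc[OF \<phi> h\<kappa> tk] by simp
      finally show ?thesis by simp
    qed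
    ultimately show ?thesis using bij_betw_cong[of ?A ?F ?G] by simp
  qed
  moreover have "cell K f (c1 K h' g) (vc K (wr K \<theta> g) \<phi>)" using vc_cell[OF \<phi> tg] .
  ultimately show ?thesis
    using ll hh' unfolding left_lifting_def by (simp add: hom1_def)
qed

lemma abs_left_lifting_iso:
  assumes ll: "abs_left_lifting K \<phi> f g h" and \<theta>: "iso2 K \<theta> h h'"
  shows "abs_left_lifting K (vc K (wr K \<theta> g) \<phi>) f g h'"
proof -
  from ll have \<phi>: "cell K f (c1 K h g) \<phi>" and g: "hom1 K (s1 K f) (s1 K h) g"
    unfolding abs_left_lifting_def left_lifting_def by (auto simp: hom1_def)
  from \<theta> have t: "cell K h h' \<theta>" unfolding iso2_def by blast
  have tg: "cell K (c1 K h g) (c1 K h' g) (wr K \<theta> g)" using wr_cell[OF t g] by simp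
  show ?thesis unfolding abs_left_lifting_def
  proof (intro conjI allI impI)
    show "left_lifting K (vc K (wr K \<theta> g) \<phi>) f g h'"
      using ll left_lifting_iso[OF _ \<theta>] unfolding abs_left_lifting_def by blast
    fix D j assume j: "hom1 K D (s1 K f) j"
    then have "left_lifting K (wr K \<phi> j) (c1 K f j) (c1 K g j) h"
      using ll unfolding abs_left_lifting_def by blast
    then show "left_lifting K (wr K (vc K (wr K \<theta> g) \<phi>) j) (c1 K f j) (c1 K g j) h'"
      using left_lifting_iso[OF _ \<theta>] wr_vc[OF \<phi> tg j] wr_c1[OF t g j] by simp
  qed
qed

lemma wl_c1_pasting:
  assumes h1: "hom1 K Y Z h1" and h2: "hom1 K Z W h2" and \<psi>: "cell K y (c1 K h2 g2) \<psi>"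
    and \<psi>': "cell K g2 (c1 K h1 g1) \<psi>'" and \<kappa>: "cell K g1 k \<kappa>" and g1: "t1 K g1 = Y"
  shows "vc K (wl K (c1 K h2 h1) \<kappa>) (vc K (wl K h2 \<psi>') \<psi>) = vc K (wl K h2 (vc K (wl K h1 \<kappa>) \<psi>')) \<psi>"
proof -
  have Z: "t1 K (c1 K h1 g1) = Z" "t1 K g2 = Z"
    using c1_hom1[of _ _ g1, OF _ h1] cell_ar[OF \<kappa>] cell_ar[OF \<psi>'] g1 by (auto simp: hom1_def)
  have w1: "cell K (c1 K h1 g1) (c1 K h1 k) (wl K h1 \<kappa>)" using wl_cell[OF h1 \<kappa> g1] .
  have w2: "cell K (c1 K h2 (c1 K h1 g1)) (c1 K h2 (c1 K h1 k)) (wl K h2 (wl K h1 \<kappa>))"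
    using wl_cell[OF h2 w1 Z(1)] .
  have w3: "cell K (c1 K h2 g2) (c1 K h2 (c1 K h1 g1)) (wl K h2 \<psi>')" using wl_cell[OF h2 \<psi>' Z(2)] .
  have "vc K (wl K h2 (vc K (wl K h1 \<kappa>) \<psi>')) \<psi> = vc K (vc K (wl K h2 (wl K h1 \<kappa>)) (wl K h2 \<psi>')) \<psi>"
    using wl_vc[OF h2 \<psi>' w1 Z(2)] by simp
  also have "\<dots> = vc K (wl K h2 (wl K h1 \<kappa>)) (vc K (wl K h2 \<psi>') \<psi>)"
    using vc_assoc[OF \<psi> w3 w2] by simp
  also have "\<dots> = vc K (wl K (c1 K h2 h1) \<kappa>) (vc K (wl K h2 \<psi>') \<psi>)"
    using wl_c1[OF h1 h2 \<kappa> g1] by simp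
  finally show ?thesis by simp
qed

lemma left_lifting_paste_iff:
  assumes \<psi>: "left_lifting K \<psi> y g2 h2" and \<psi>': "cell K g2 (c1 K h1 g1) \<psi>'"
    and h1: "hom1 K (t1 K g1) (t1 K g2) h1" and g1: "g1 \<in> ar K" "s1 K g1 = s1 K g2"
  shows "left_lifting K (vc K (wl K h2 \<psi>') \<psi>) y g1 (c1 K h2 h1) \<longleftrightarrow> left_lifting K \<psi>' g2 g1 h1"
proof -
  from \<psi> have cell\<psi>: "cell K y (c1 K h2 g2) \<psi>" and h2: "hom1 K (t1 K g2) (t1 K y) h2"
    and g2: "hom1 K (s1 K y) (t1 K g2) g2"
    and lifts: "\<And>k. hom1 K (s1 K y) (t1 K g2) k \<Longrightarrow>
      bij_betw (\<lambda>\<kappa>. vc K (wl K h2 \<kappa>) \<psi>) {\<kappa>. cell K g2 k \<kappa>} {\<phi>. cell K y (c1 K h2 k) \<phi>}"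
    unfolding left_lifting_def by (auto simp: hom1_def)
  have g1': "hom1 K (s1 K y) (t1 K g1) g1" using g1 g2 by (simp add: hom1_def)
  have "cell K (c1 K h2 g2) (c1 K h2 (c1 K h1 g1)) (wl K h2 \<psi>')"
    using wl_cell[OF h2 \<psi>'] by simp
  then have pasted: "cell K y (c1 K (c1 K h2 h1) g1) (vc K (wl K h2 \<psi>') \<psi>)"
    using vc_cell[OF cell\<psi>] c1_assoc[OF g1' h1 h2] by simp
  have "bij_betw (\<lambda>\<kappa>. vc K (wl K (c1 K h2 h1) \<kappa>) (vc K (wl K h2 \<psi>') \<psi>)) {\<kappa>. cell K g1 k \<kappa>}
      {\<phi>. cell K y (c1 K (c1 K h2 h1) k) \<phi>}
    \<longleftrightarrow> bij_betw (\<lambda>\<kappa>. vc K (wl K h1 \<kappa>) \<psi>') {\<kappa>. cell K g1 k \<kappa>} {\<phi>. cell K g2 (c1 K h1 k) \<phi>}"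
    (is "bij_betw ?F ?A ?C \<longleftrightarrow> bij_betw ?H ?A ?B")
    if k: "hom1 K (s1 K y) (t1 K g1) k" for k
  proof -
    let ?G = "\<lambda>\<rho>. vc K (wl K h2 \<rho>) \<psi>"
    have G: "bij_betw ?G ?B ?C"
      using lifts[OF c1_hom1[OF k h1]] c1_assoc[OF k h1 h2] by simp
    have H: "?H ` ?A \<subseteq> ?B"
      using vc_cell[OF \<psi>' wl_cell[OF h1]] by auto
    have F: "?F \<kappa> = (?G \<circ> ?H) \<kappa>" if "\<kappa> \<in> ?A" for \<kappa>
      using wl_c1_pasting[OF h1 h2 cell\<psi> \<psi>'] that by simp
    show ?thesis
      using bij_betw_comp_iff2[OF G H] bij_betw_cong[of ?A ?F "?G \<circ> ?H", OF F] by simp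
  qed
  moreover have "y \<in> ar K" "g2 \<in> ar K" "s1 K g2 = s1 K y"
    using \<psi> unfolding left_lifting_def by auto
  moreover have "h1 \<in> ar K" "s1 K h1 = t1 K g1" "t1 K h1 = t1 K g2"
    using h1 by (auto simp: hom1_def)
  moreover have "c1 K h2 h1 \<in> ar K" "s1 K (c1 K h2 h1) = t1 K g1" "t1 K (c1 K h2 h1) = t1 K y"
    using c1_hom1[OF h1 h2] by (auto simp: hom1_def)
  ultimately show ?thesis
    using g1 \<psi>' pasted unfolding left_lifting_def by (simp cong: imp_cong)
qed

lemma abs_left_lifting_paste_iff:
  assumes \<psi>: "abs_left_lifting K \<psi> y g2 h2" and \<psi>': "cell K g2 (c1 K h1 g1) \<psi>'"
    and h1: "hom1 K (t1 K g1) (t1 K g2) h1" and g1: "g1 \<in> ar K" "s1 K g1 = s1 K g2"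
  shows "abs_left_lifting K (vc K (wl K h2 \<psi>') \<psi>) y g1 (c1 K h2 h1) \<longleftrightarrow>
    abs_left_lifting K \<psi>' g2 g1 h1"
proof -
  from \<psi> have ll: "left_lifting K \<psi> y g2 h2"
    and lj: "\<And>D j. hom1 K D (s1 K y) j \<Longrightarrow> left_lifting K (wr K \<psi> j) (c1 K y j) (c1 K g2 j) h2"
    unfolding abs_left_lifting_def by auto
  from ll have cell\<psi>: "cell K y (c1 K h2 g2) \<psi>" and h2: "hom1 K (t1 K g2) (t1 K y) h2"
    and g2': "hom1 K (s1 K y) (t1 K g2) g2" and g2: "s1 K g2 = s1 K y"
    unfolding left_lifting_def by (auto simp: hom1_def)
  have g1': "hom1 K (s1 K y) (t1 K g1) g1" using g1 g2 by (simp add: hom1_def)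
  have h2\<psi>': "cell K (c1 K h2 g2) (c1 K h2 (c1 K h1 g1)) (wl K h2 \<psi>')"
    using wl_cell[OF h2 \<psi>'] by simp
  have "left_lifting K (wr K (vc K (wl K h2 \<psi>') \<psi>) j) (c1 K y j) (c1 K g1 j) (c1 K h2 h1)
     \<longleftrightarrow> left_lifting K (wr K \<psi>' j) (c1 K g2 j) (c1 K g1 j) h1"
    if j: "hom1 K D (s1 K y) j" for D j
  proof -
    have g1j: "hom1 K D (t1 K g1) (c1 K g1 j)" using c1_hom1[OF j g1'] .
    have g2j: "hom1 K D (t1 K g2) (c1 K g2 j)" using c1_hom1[OF j g2'] .
    have "wr K (vc K (wl K h2 \<psi>') \<psi>) j = vc K (wl K h2 (wr K \<psi>' j)) (wr K \<psi> j)"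
      using wr_vc[OF cell\<psi> h2\<psi>' j] wr_wl[OF h2 \<psi>' _ j] g2 cell_ar[OF \<psi>'] by simp
    moreover have "cell K (c1 K g2 j) (c1 K h1 (c1 K g1 j)) (wr K \<psi>' j)"
      using wr_cell[OF \<psi>' j] c1_assoc[OF j g1' h1] g2 by simp
    moreover have "hom1 K (t1 K (c1 K g1 j)) (t1 K (c1 K g2 j)) h1"
      using h1 g1j g2j by (simp add: hom1_def)
    ultimately show ?thesis
      using left_lifting_paste_iff[OF lj[OF j]] g1j g2j by (simp add: hom1_def)
  qed
  then show ?thesis
    using left_lifting_paste_iff[OF ll \<psi>' h1 g1] g2 unfolding abs_left_lifting_def by auto
qed

end

locale yoneda_structure = two_category K for K :: "('o,'a,'c) tcat" +
  fixes Y :: "('o,'a,'c) ystr"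
  assumes good_yoneda: "good_yoneda K Y"
begin

lemma adm_c1: "adm Y f \<Longrightarrow> g \<in> ar K \<Longrightarrow> t1 K g = s1 K f \<Longrightarrow> adm Y (c1 K f g)"
  using good_yoneda unfolding good_yoneda_def by blast

lemma rep_hom1: "adm Y f \<Longrightarrow> adm_ob Y K (s1 K f) \<Longrightarrow> hom1 K (t1 K f) (PP Y (s1 K f)) (rep Y f)"
  using good_yoneda unfolding good_yoneda_def by blast

lemma chi_abs_left_lifting:
  "adm Y f \<Longrightarrow> adm_ob Y K (s1 K f) \<Longrightarrow>
   abs_left_lifting K (chi Y f) (yo Y (s1 K f)) f (rep Y f)"
  using good_yoneda unfolding good_yoneda_def by blast

lemma abs_left_lifting_yo_left_ext:
  "adm Y f \<Longrightarrow> adm_ob Y K (s1 K f) \<Longrightarrow> abs_left_lifting K \<psi> (yo Y (s1 K f)) f k \<Longrightarrow>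
   left_ext K \<psi> (yo Y (s1 K f)) f k"
  using good_yoneda unfolding good_yoneda_def pw_left_ext_def by blast

lemma adm_hom1_into_PP:
  assumes "small K Y C" and i: "hom1 K M (PP Y C) i"
  shows "adm Y i"
proof -
  have "adm Y (id1 K (PP Y C))" using assms(1) by (simp add: small_def adm_ob_def)
  moreover have "PP Y C \<in> ob K" using ar_ob[of i] i unfolding hom1_def by metis
  ultimately have "adm Y (c1 K (id1 K (PP Y C)) i)"
    using adm_c1 id1_hom1 i by (simp add: hom1_def)
  then show ?thesis using c1_id1_left[OF i] by simp
qed

lemma rep_iso_if_wcolimit:
  assumes i: "hom1 K M (PP Y C) i" "adm Y i" and M: "adm_ob Y K M"
    and f: "hom1 K C A f" "adm Y f" "adm_ob Y K C"
    and colim: "is_wcolimit K Y i f col \<eta>"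
  shows "\<exists>\<theta>. iso2 K \<theta> (rep Y col) (c1 K (rep Y i) (rep Y f))"
proof -
  from colim i f have col: "adm Y col" "hom1 K M A col"
    and \<eta>: "cell K i (c1 K (rep Y f) col) \<eta>" "abs_left_lifting K \<eta> i col (rep Y f)"
    unfolding is_wcolimit_def by (auto simp: hom1_def)
  have \<chi>i: "abs_left_lifting K (chi Y i) (yo Y M) i (rep Y i)"
    using chi_abs_left_lifting[OF i(2)] M i(1) unfolding hom1_def by metis
  have rep_f: "hom1 K A (PP Y C) (rep Y f)" using rep_hom1 f by (simp add: hom1_def)
  have "abs_left_lifting K (vc K (wl K (rep Y i) \<eta>) (chi Y i)) (yo Y M) col (c1 K (rep Y i) (rep Y f))"
    using abs_left_lifting_paste_iff[OF \<chi>i \<eta>(1)] \<eta>(2) rep_f col i by (simp add: hom1_def)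
  moreover have "s1 K col = M" using col(2) by (simp add: hom1_def)
  ultimately have "left_ext K (vc K (wl K (rep Y i) \<eta>) (chi Y i)) (yo Y M) col (c1 K (rep Y i) (rep Y f))"
    using abs_left_lifting_yo_left_ext col(1) M by metis
  moreover have "left_ext K (chi Y col) (yo Y M) col (rep Y col)"
    using abs_left_lifting_yo_left_ext chi_abs_left_lifting col(1) M \<open>s1 K col = M\<close> by metis
  ultimately show ?thesis using left_ext_unique by blast
qed

lemma wcolimit_if_rep_iso:
  assumes i: "hom1 K M (PP Y C) i" "adm Y i" and M: "adm_ob Y K M"
    and f: "hom1 K C A f" "adm Y f" "adm_ob Y K C"
    and col: "adm Y col" "hom1 K M A col"
    and \<theta>: "iso2 K \<theta> (rep Y col) (c1 K (rep Y i) (rep Y f))"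
  shows "\<exists>\<eta>. is_wcolimit K Y i f col \<eta>"
proof -
  define \<sigma> where "\<sigma> = vc K (wr K \<theta> col) (chi Y col)"
  have \<chi>i: "abs_left_lifting K (chi Y i) (yo Y M) i (rep Y i)"
    using chi_abs_left_lifting[OF i(2)] M i(1) unfolding hom1_def by metis
  have rep_f: "hom1 K A (PP Y C) (rep Y f)" using rep_hom1 f by (simp add: hom1_def)
  have rep_i: "hom1 K (PP Y C) (PP Y M) (rep Y i)" using rep_hom1 i M by (simp add: hom1_def)
  have \<sigma>: "abs_left_lifting K \<sigma> (yo Y M) col (c1 K (rep Y i) (rep Y f))"
    unfolding \<sigma>_def using abs_left_lifting_iso[OF chi_abs_left_lifting \<theta>] col M
    by (simp add: hom1_def)
  then have "cell K (yo Y M) (c1 K (rep Y i) (c1 K (rep Y f) col)) \<sigma>"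
    using c1_assoc[OF col(2) rep_f rep_i] unfolding abs_left_lifting_def left_lifting_def by simp
  moreover have \<chi>i': "left_lifting K (chi Y i) (yo Y M) i (rep Y i)"
    using \<chi>i unfolding abs_left_lifting_def by blast
  moreover have "hom1 K (s1 K (yo Y M)) (s1 K (rep Y i)) (c1 K (rep Y f) col)"
    using \<chi>i' c1_hom1[OF col(2) rep_f] i(1) rep_i unfolding left_lifting_def hom1_def by auto
  ultimately obtain \<eta> where \<eta>: "cell K i (c1 K (rep Y f) col) \<eta>" "vc K (wl K (rep Y i) \<eta>) (chi Y i) = \<sigma>"
    using left_lifting_factor by metis
  have "abs_left_lifting K \<eta> i col (rep Y f)"
    using abs_left_lifting_paste_iff[OF \<chi>i \<eta>(1)] \<eta>(2) \<sigma> rep_f col i by (simp add: hom1_def)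
  then show ?thesis unfolding is_wcolimit_def using col \<eta>(1) i f by (auto simp: hom1_def)
qed

end

theorem corollary3p11:
  fixes K :: "('o,'a,'c) tcat" and Y :: "('o,'a,'c) ystr"
  assumes "twocat K" and "fin_complete K" and "good_yoneda K Y"
    and "small K Y C"
    and "hom1 K M (PP Y C) i" and "hom1 K C A f"
    and "adm_ob Y K M" and "adm Y f"
  shows "has_wcolimit K Y i f \<longleftrightarrow>
    (\<exists>col. adm Y col \<and> hom1 K M A col \<and>
       (\<exists>\<theta>. iso2 K \<theta> (rep Y col) (c1 K (rep Y i) (rep Y f))))"
proof -
  interpret yoneda_structure K Y
    using assms(1,3) two_category_if_twocat
    by (simp add: yoneda_structure_def yoneda_structure_axioms_def)
  have i: "adm Y i" using adm_hom1_into_PP[OF assms(4,5)] .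
  have C: "adm_ob Y K C" using assms(4) by (simp add: small_def)
  show ?thesis
  proof
    assume "has_wcolimit K Y i f"
    then obtain col \<eta> where colim: "is_wcolimit K Y i f col \<eta>" unfolding has_wcolimit_def by blast
    then have "adm Y col" "hom1 K M A col"
      using assms(5,6) unfolding is_wcolimit_def by (auto simp: hom1_def)
    then show "\<exists>col. adm Y col \<and> hom1 K M A col \<and>
        (\<exists>\<theta>. iso2 K \<theta> (rep Y col) (c1 K (rep Y i) (rep Y f)))"
      using rep_iso_if_wcolimit[OF assms(5) i assms(7) assms(6) assms(8) C colim] by blast
  next
    assume "\<exists>col. adm Y col \<and> hom1 K M A col \<and>
        (\<exists>\<theta>. iso2 K \<theta> (rep Y col) (c1 K (rep Y i) (rep Y f)))"
    then show "has_wcolimit K Y i f"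
      unfolding has_wcolimit_def
      using wcolimit_if_rep_iso[OF assms(5) i assms(7) assms(6) assms(8) C] by blast
  qed
qed

end
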